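(* For every countable ordinal $\lambda<\omega_1$ there is a continuous map $f_\lambda:[0,1]\to[0,1]$ such that the chain components poset $(\mathfrak{C}_{f_\lambda},\preceq)$ is order isomorphic to the ordinal $\lambda+1$ with its usual order $\in$.
   Context: For a map $f:[0,1]\to[0,1]$ with the usual metric: an $\varepsilon$-chain from $x$ to $y$ is a finite sequence $x_0=x,\dots,x_n=y$, $n\ge1$, with $|f(x_i)-x_{i+1}|<\varepsilon$; $x\,\mathcal{C}\,y$ iff for every $\varepsilon>0$ there is an $\varepsilon$-chain from $x$ to $y$; $CR_f=\{x:x\,\mathcal{C}\,x\}$; $x\,E\,y$ iff $x\,\mathcal{C}\,y$ and $y\,\mathcal{C}\,x$; $\mathfrak{C}_f=CR_f/E$ is the set of chain components, partially ordered by $[x]\preceq[y]$ iff $y\,\mathcal{C}\,x$. *)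

theory Defs
  imports "HOL-Analysis.Analysis"
begin

definition eps_chain :: "(real \<Rightarrow> real) \<Rightarrow> real \<Rightarrow> real \<Rightarrow> real \<Rightarrow> bool" where
  "eps_chain f \<epsilon> x y \<longleftrightarrow>
     (\<exists>n::nat. \<exists>xs::nat \<Rightarrow> real. n \<ge> 1 \<and> xs 0 = x \<and> xs n = y \<and>
        (\<forall>i\<le>n. xs i \<in> {0..1}) \<and>
        (\<forall>i<n. \<bar>f (xs i) - xs (Suc i)\<bar> < \<epsilon>))"

definition chain_rel :: "(real \<Rightarrow> real) \<Rightarrow> real \<Rightarrow> real \<Rightarrow> bool" where
  "chain_rel f x y \<longleftrightarrow> (\<forall>\<epsilon>>0. eps_chain f \<epsilon> x y)"

definition chain_recurrent :: "(real \<Rightarrow> real) \<Rightarrow> real set" where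
  "chain_recurrent f = {x \<in> {0..1}. chain_rel f x x}"

definition chain_equiv :: "(real \<Rightarrow> real) \<Rightarrow> (real \<times> real) set" where
  "chain_equiv f = {(x, y). x \<in> chain_recurrent f \<and> y \<in> chain_recurrent f \<and>
                            chain_rel f x y \<and> chain_rel f y x}"

definition chain_components :: "(real \<Rightarrow> real) \<Rightarrow> real set set" where
  "chain_components f = chain_recurrent f // chain_equiv f"

definition comp_le :: "(real \<Rightarrow> real) \<Rightarrow> real set \<Rightarrow> real set \<Rightarrow> bool" where
  "comp_le f A B \<longleftrightarrow> (\<exists>x\<in>A. \<exists>y\<in>B. chain_rel f y x)"

text \<open>Given a well order r (an ordinal lambda), the (non-strict) order of lambda+1:
  a copy of r (via Some) with a new greatest element None on top.\<close>
definition succ_ord :: "'a rel \<Rightarrow> 'a option rel" where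
  "succ_ord r = {(Some a, Some b) | a b. (a, b) \<in> r} \<union>
                {(x, None) | x. x \<in> Some ` Field r \<union> {None}}"

end

theory Submission
  imports Defs
begin

(*
  Give the elements a of the countable well order lambda positive weights w(a) of total at
  most 1, and send x in lambda + 1 to the total weight of the elements of lambda below x.
  The image Z is a closed subset of [0,1] containing 0 and order isomorphic to lambda + 1,
  and the point of each a < lambda is followed by a gap of length w(a), so Z contains no
  interval.  The map f(x) = x - d(x, Z)/2 fixes Z and moves every other point down.  For
  p <= q in Z an eps-chain can descend from q to p, but no eps-chain can climb past a point
  y outside Z, since f(y) < y and, by continuity, every eps-step from a point at or below y
  lands below y.  Hence CR_f = Z, the chain components are the singletons of Z, and they are
  ordered like Z, that is like lambda + 1.
*)

definition descent_map :: "real set \<Rightarrow> real \<Rightarrow> real" where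
  "descent_map Z x = x - infdist x Z / 2"

lemma eps_chain_stays_below:
  assumes "eps_chain f \<epsilon> x z" "x \<le> y"
    and step: "\<And>u v. u \<in> {0..1} \<Longrightarrow> u \<le> y \<Longrightarrow> \<bar>f u - v\<bar> < \<epsilon> \<Longrightarrow> v < y"
  shows "z < y"
proof -
  obtain n xs where "n \<ge> 1" "xs 0 = x" "xs n = z" and xs01: "\<forall>i\<le>n. xs i \<in> {0..1}"
    and steps: "\<forall>i<n. \<bar>f (xs i) - xs (Suc i)\<bar> < \<epsilon>"
    using assms(1) unfolding eps_chain_def by blast
  have "xs (Suc i) < y" if "i < n" for i
    using that
  proof (induction i)
    case 0
    then show ?case using step xs01 steps \<open>xs 0 = x\<close> \<open>x \<le> y\<close> by auto
  next
    case (Suc i)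
    then show ?case using step[of "xs (Suc i)"] xs01 steps by auto
  qed
  then show "z < y" using \<open>n \<ge> 1\<close> \<open>xs n = z\<close> by (cases n) auto
qed

lemma no_eps_chain_across_drop:
  assumes cont: "continuous_on {0..1} f" and below: "\<forall>x\<in>{0..1}. f x \<le> x"
    and y: "y \<in> {0..1}" "f y < y"
  obtains \<epsilon> where "\<epsilon> > 0" "\<And>x z. x \<le> y \<Longrightarrow> y \<le> z \<Longrightarrow> \<not> eps_chain f \<epsilon> x z"
proof -
  define \<delta> where "\<delta> = y - f y"
  have "\<delta> > 0" using y \<delta>_def by simp
  from cont y(1) have "continuous (at y within {0..1}) f"
    using continuous_on_eq_continuous_within by blast
  then obtain \<eta> where "\<eta> > 0" and \<eta>: "\<And>x. x \<in> {0..1} \<Longrightarrow> dist x y < \<eta> \<Longrightarrow> dist (f x) (f y) < \<delta>/2"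
    using \<open>\<delta> > 0\<close> unfolding continuous_within_eps_delta by (meson half_gt_zero)
  define \<epsilon> where "\<epsilon> = min \<eta> (\<delta>/2)"
  \<comment> \<open>Near y the map drops by almost \<delta>, far below y it does not increase: either way
     an \<epsilon>-step from a point at or below y lands strictly below y.\<close>
  have step: "x' < y" if "x \<in> {0..1}" "x \<le> y" "\<bar>f x - x'\<bar> < \<epsilon>" for x x'
  proof (cases "dist x y < \<eta>")
    case True
    then have "dist (f x) (f y) < \<delta>/2" using \<eta> that(1) by blast
    then have "f x < f y + \<delta>/2" unfolding dist_real_def abs_less_iff by linarith
    moreover have "x' < f x + \<epsilon>" using that(3) by (simp add: abs_less_iff)
    moreover have "\<epsilon> \<le> \<delta>/2" using \<epsilon>_def by simp
    ultimately show ?thesis using \<delta>_def by linarith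
  next
    case False
    then have "x \<le> y - \<eta>" using that(2) by (auto simp: dist_real_def)
    moreover have "f x \<le> x" using below that(1) by blast
    moreover have "x' < f x + \<epsilon>" using that(3) by (simp add: abs_less_iff)
    moreover have "\<epsilon> \<le> \<eta>" using \<epsilon>_def by simp
    ultimately show ?thesis by linarith
  qed
  show thesis
  proof (rule that)
    show "\<epsilon> > 0" using \<open>\<eta> > 0\<close> \<open>\<delta> > 0\<close> \<epsilon>_def by simp
    show "\<not> eps_chain f \<epsilon> x z" if "x \<le> y" "y \<le> z" for x z
      using eps_chain_stays_below[OF _ \<open>x \<le> y\<close> step] \<open>y \<le> z\<close> by fastforce
  qed
qed

lemma eps_chain_descending:
  assumes "0 \<le> p" "p \<le> q" "q \<le> 1" and between: "\<And>x. x \<in> {p..q} \<Longrightarrow> p \<le> f x \<and> f x \<le> x"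
    and "\<epsilon> > 0"
  shows "eps_chain f \<epsilon> q p"
proof -
  define xs where "xs i = ((\<lambda>x. max p (f x - \<epsilon>/2)) ^^ i) q" for i
  have xs_Suc: "xs (Suc i) = max p (f (xs i) - \<epsilon>/2)" for i
    by (simp add: xs_def)
  \<comment> \<open>Each step descends by at least \<epsilon>/2 until it is clamped at p.\<close>
  have bound: "p \<le> xs i \<and> xs i \<le> q \<and> xs i \<le> max p (q - i * \<epsilon>/2)" for i
  proof (induction i)
    case 0
    show ?case using assms by (simp add: xs_def)
  next
    case (Suc i)
    then have "f (xs i) \<le> xs i" using between by auto
    moreover have "f (xs i) - \<epsilon>/2 \<le> max p (q - Suc i * \<epsilon>/2)"
    proof (cases "xs i \<le> p")
      case True
      then show ?thesis using \<open>f (xs i) \<le> xs i\<close> \<open>\<epsilon> > 0\<close> by auto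
    next
      case False
      then have "xs i \<le> q - i * \<epsilon>/2" using Suc by auto
      moreover have "real (Suc i) * \<epsilon>/2 = i * \<epsilon>/2 + \<epsilon>/2" by (simp add: field_simps)
      ultimately have "f (xs i) - \<epsilon>/2 \<le> q - Suc i * \<epsilon>/2" using \<open>f (xs i) \<le> xs i\<close> by linarith
      then show ?thesis by linarith
    qed
    ultimately show ?case using Suc \<open>p \<le> q\<close> \<open>\<epsilon> > 0\<close> unfolding xs_Suc by auto
  qed
  define n where "n = nat \<lceil>2 * (q - p) / \<epsilon>\<rceil> + 1"
  have "2 * (q - p) / \<epsilon> \<le> n" using real_nat_ceiling_ge[of "2 * (q - p) / \<epsilon>"] n_def by simp
  then have "2 * (q - p) \<le> n * \<epsilon>" using \<open>\<epsilon> > 0\<close> by (simp add: pos_divide_le_eq)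
  then have "xs n = p" using bound[of n] by (auto simp: max_def split: if_splits)
  moreover have "\<bar>f (xs i) - xs (Suc i)\<bar> < \<epsilon>" for i
    using bound[of i] between[of "xs i"] \<open>\<epsilon> > 0\<close> unfolding xs_Suc by (auto simp: max_def abs_if)
  moreover have "xs i \<in> {0..1}" for i using bound[of i] assms by auto
  ultimately show ?thesis unfolding eps_chain_def n_def
    by (intro exI[of _ n] exI[of _ xs]) (auto simp: xs_def n_def)
qed

lemma continuous_on_descent_map: "continuous_on S (descent_map Z)"
  unfolding descent_map_def by (intro continuous_intros) auto

lemma descent_map_le: "descent_map Z x \<le> x"
  unfolding descent_map_def using infdist_nonneg[of x Z] by simp

lemma descent_map_ge: "p \<in> Z \<Longrightarrow> p \<le> x \<Longrightarrow> p \<le> descent_map Z x"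
  unfolding descent_map_def using infdist_le[of p Z x] by (simp add: dist_real_def)

lemma descent_map_less: "closed Z \<Longrightarrow> Z \<noteq> {} \<Longrightarrow> x \<notin> Z \<Longrightarrow> descent_map Z x < x"
  unfolding descent_map_def using infdist_pos_not_in_closed[of Z x] by simp

locale nowhere_dense_closed_set =
  fixes Z :: "real set"
  assumes closed_Z: "closed Z" and Z_subset: "Z \<subseteq> {0..1}" and zero_in_Z: "0 \<in> Z"
    and gap: "\<And>p q. p \<in> Z \<Longrightarrow> q \<in> Z \<Longrightarrow> p < q \<Longrightarrow> \<exists>y. p < y \<and> y < q \<and> y \<notin> Z"
begin

lemma descent_map_into_unit: "descent_map Z ` {0..1} \<subseteq> {0..1}"
proof (clarsimp)
  fix x :: real assume "0 \<le> x" "x \<le> 1"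
  then show "0 \<le> descent_map Z x \<and> descent_map Z x \<le> 1"
    using descent_map_le[of Z x] descent_map_ge[OF zero_in_Z] by auto
qed

lemma descent_map_strict_off_Z: "x \<notin> Z \<Longrightarrow> descent_map Z x < x"
  using descent_map_less closed_Z zero_in_Z by blast

lemma no_eps_chain_across_gap:
  assumes "y \<in> {0..1}" "y \<notin> Z"
  obtains \<epsilon> where "\<epsilon> > 0" "\<And>x z. x \<le> y \<Longrightarrow> y \<le> z \<Longrightarrow> \<not> eps_chain (descent_map Z) \<epsilon> x z"
  using no_eps_chain_across_drop[OF continuous_on_descent_map _ assms(1) descent_map_strict_off_Z[OF assms(2)]]
    descent_map_le by blast

lemma chain_rel_descent_map_iff:
  assumes "p \<in> Z" "q \<in> Z"
  shows "chain_rel (descent_map Z) p q \<longleftrightarrow> q \<le> p"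
proof
  assume "q \<le> p"
  then show "chain_rel (descent_map Z) p q"
    unfolding chain_rel_def using assms Z_subset descent_map_le descent_map_ge[OF assms(2)]
    by (auto intro!: eps_chain_descending)
next
  assume chain: "chain_rel (descent_map Z) p q"
  show "q \<le> p"
  proof (rule ccontr)
    assume "\<not> q \<le> p"
    then obtain y where "p < y" "y < q" "y \<notin> Z" using gap assms by force
    moreover have "y \<in> {0..1}" using \<open>p < y\<close> \<open>y < q\<close> assms Z_subset by force
    ultimately obtain \<epsilon> where "\<epsilon> > 0" "\<not> eps_chain (descent_map Z) \<epsilon> p q"
      using no_eps_chain_across_gap by (metis less_imp_le)
    then show False using chain unfolding chain_rel_def by blast
  qed
qed

lemma chain_recurrent_descent_map: "chain_recurrent (descent_map Z) = Z"
proof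
  show "chain_recurrent (descent_map Z) \<subseteq> Z"
  proof
    fix x assume "x \<in> chain_recurrent (descent_map Z)"
    then have "x \<in> {0..1}" "chain_rel (descent_map Z) x x" unfolding chain_recurrent_def by auto
    then show "x \<in> Z"
      using no_eps_chain_across_gap[of x] unfolding chain_rel_def by (metis order_refl)
  qed
  show "Z \<subseteq> chain_recurrent (descent_map Z)"
    using chain_rel_descent_map_iff Z_subset unfolding chain_recurrent_def by auto
qed

lemma chain_components_descent_map: "chain_components (descent_map Z) = (\<lambda>p. {p}) ` Z"
proof -
  have "chain_equiv (descent_map Z) = Id_on Z"
    unfolding chain_equiv_def chain_recurrent_descent_map
    using chain_rel_descent_map_iff by (auto simp: Id_on_def)
  then show ?thesis
    unfolding chain_components_def chain_recurrent_descent_map quotient_def by auto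
qed

lemma comp_le_descent_map_iff: "p \<in> Z \<Longrightarrow> q \<in> Z \<Longrightarrow> comp_le (descent_map Z) {p} {q} \<longleftrightarrow> p \<le> q"
  unfolding comp_le_def using chain_rel_descent_map_iff by auto

lemma chain_components_order_isomorphic:
  assumes bij: "bij_betw \<psi> (Field s) Z"
    and mono: "\<And>x y. x \<in> Field s \<Longrightarrow> y \<in> Field s \<Longrightarrow> \<psi> x \<le> \<psi> y \<longleftrightarrow> (x, y) \<in> s"
  shows "\<exists>\<phi>. bij_betw \<phi> (chain_components (descent_map Z)) (Field s) \<and>
           (\<forall>A\<in>chain_components (descent_map Z). \<forall>B\<in>chain_components (descent_map Z).
              comp_le (descent_map Z) A B \<longleftrightarrow> (\<phi> A, \<phi> B) \<in> s)"
proof -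
  define \<sigma> where "\<sigma> x = {\<psi> x}" for x
  have "bij_betw (\<lambda>p. {p}) Z (chain_components (descent_map Z))"
    unfolding chain_components_descent_map by (simp add: bij_betw_def inj_on_def)
  then have \<sigma>: "bij_betw \<sigma> (Field s) (chain_components (descent_map Z))"
    unfolding \<sigma>_def using bij_betw_trans[OF bij] by (simp add: comp_def)
  define \<phi> where "\<phi> = inv_into (Field s) \<sigma>"
  have \<phi>: "bij_betw \<phi> (chain_components (descent_map Z)) (Field s)"
    unfolding \<phi>_def by (rule bij_betw_inv_into[OF \<sigma>])
  have "comp_le (descent_map Z) A B \<longleftrightarrow> (\<phi> A, \<phi> B) \<in> s"
    if AB: "A \<in> chain_components (descent_map Z)" "B \<in> chain_components (descent_map Z)" for A B
  proof -
    have "A \<in> \<sigma> ` Field s" "B \<in> \<sigma> ` Field s"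
      using AB \<sigma> by (simp_all add: bij_betw_def)
    then obtain a b where ab: "a \<in> Field s" "b \<in> Field s" "A = \<sigma> a" "B = \<sigma> b"
      by blast
    then have "\<phi> A = a" "\<phi> B = b"
      unfolding \<phi>_def using \<sigma> by (auto simp: bij_betw_def)
    moreover have "\<psi> a \<in> Z" "\<psi> b \<in> Z" using ab bij bij_betwE by blast+
    ultimately show ?thesis
      using ab comp_le_descent_map_iff mono unfolding \<sigma>_def by simp
  qed
  then show ?thesis using \<phi> by blast
qed

end

lemma countable_positive_weights:
  fixes A :: "'a set"
  assumes "countable A"
  obtains w :: "'a \<Rightarrow> real" where "\<And>a. 0 < w a" "w summable_on A" "infsum w A \<le> 1"
proof -
  define g :: "nat \<Rightarrow> real" where "g n = (1/2) ^ Suc n" for n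
  have "(g has_sum 1) UNIV"
    unfolding g_def by (rule sums_nonneg_imp_has_sum[OF power_half_series]) simp
  then have g: "g summable_on UNIV" "infsum g UNIV = 1"
    by (auto simp: summable_on_def infsumI)
  define idx where "idx = to_nat_on A"
  have inj: "inj_on idx A"
    unfolding idx_def by (rule inj_on_to_nat_on[OF assms])
  have "g summable_on idx ` A"
    using summable_on_subset[OF g(1)] by blast
  then have summable: "(g \<circ> idx) summable_on A"
    using summable_on_reindex[OF inj] by blast
  have "infsum (g \<circ> idx) A = infsum g (idx ` A)"
    by (rule infsum_reindex[OF inj, symmetric])
  also have "\<dots> \<le> infsum g UNIV"
    using \<open>g summable_on idx ` A\<close> g(1) by (intro infsum_mono2) (auto simp: g_def)
  finally have "infsum (g \<circ> idx) A \<le> 1" using g(2) by simp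
  moreover have "0 < (g \<circ> idx) a" for a by (simp add: g_def)
  ultimately show thesis using that summable by blast
qed

lemma Field_succ_ord: "Field (succ_ord r) = insert None (Some ` Field r)"
proof
  show "Field (succ_ord r) \<subseteq> insert None (Some ` Field r)"
    unfolding succ_ord_def by (auto simp: Field_def)
  have "(x, None) \<in> succ_ord r" if "x \<in> insert None (Some ` Field r)" for x
    using that unfolding succ_ord_def by auto
  then show "insert None (Some ` Field r) \<subseteq> Field (succ_ord r)"
    by (blast intro: FieldI1)
qed

lemma Some_in_Field_succ_ord [simp]: "Some a \<in> Field (succ_ord r) \<longleftrightarrow> a \<in> Field r"
  by (auto simp: Field_succ_ord)

lemma Some_Some_in_succ_ord [simp]: "(Some a, Some b) \<in> succ_ord r \<longleftrightarrow> (a, b) \<in> r"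
  unfolding succ_ord_def by auto

lemma None_Some_notin_succ_ord [simp]: "(None, Some b) \<notin> succ_ord r"
  unfolding succ_ord_def by auto

lemma below_None_in_succ_ord: "(x, None) \<in> succ_ord r \<longleftrightarrow> x \<in> Field (succ_ord r)"
  unfolding Field_succ_ord by (auto simp: succ_ord_def)

locale weighted_well_order = wo_rel r for r :: "'a rel" +
  fixes w :: "'a \<Rightarrow> real"
  assumes weight_pos: "\<And>a. a \<in> Field r \<Longrightarrow> 0 < w a"
    and weight_summable: "w summable_on Field r"
    and total_weight: "infsum w (Field r) \<le> 1"
begin

abbreviation mass :: "'a set \<Rightarrow> real" where
  "mass A \<equiv> infsum w A"

lemma ofilter_subset_Field: "ofilter D \<Longrightarrow> D \<subseteq> Field r"
  unfolding ofilter_def by blast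

lemma summable_on_Field_subset: "A \<subseteq> Field r \<Longrightarrow> w summable_on A"
  using summable_on_subset weight_summable by blast

lemma mass_nonneg: "A \<subseteq> Field r \<Longrightarrow> 0 \<le> mass A"
  using weight_pos by (intro infsum_nonneg) (auto intro: less_imp_le)

lemma mass_mono: "A \<subseteq> B \<Longrightarrow> B \<subseteq> Field r \<Longrightarrow> mass A \<le> mass B"
  using weight_pos by (intro infsum_mono2 summable_on_Field_subset) (auto intro: less_imp_le)

lemma mass_insert: "A \<subseteq> Field r \<Longrightarrow> a \<notin> A \<Longrightarrow> mass (insert a A) = w a + mass A"
  by (intro infsum_insert summable_on_Field_subset)

lemma mass_strict_mono:
  assumes "A \<subset> B" "B \<subseteq> Field r"
  shows "mass A < mass B"
proof -
  obtain b where "b \<in> B" "b \<notin> A" using assms(1) by blast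
  then have "mass A < w b + mass A" using weight_pos assms(2) by (simp add: subset_iff)
  also have "\<dots> = mass (insert b A)" using mass_insert assms \<open>b \<notin> A\<close> by auto
  also have "\<dots> \<le> mass B" using mass_mono assms \<open>b \<in> B\<close> by auto
  finally show ?thesis .
qed

lemma mass_under: "a \<in> Field r \<Longrightarrow> mass (under a) = mass (underS a) + w a"
  using Refl_under_underS[OF REFL] mass_insert[OF Order_Relation.underS_Field underS_notIn] by simp

lemma ofilter_mass_le_iff:
  assumes "ofilter A" "ofilter B"
  shows "mass A \<le> mass B \<longleftrightarrow> A \<subseteq> B"
proof
  have "A \<subseteq> Field r" "B \<subseteq> Field r" using assms ofilter_subset_Field by blast+
  show "A \<subseteq> B" if "mass A \<le> mass B"
  proof (rule ccontr)
    assume "\<not> A \<subseteq> B"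
    then have "B \<subset> A" using ofilter_linord[OF assms] by blast
    then have "mass B < mass A" using mass_strict_mono \<open>A \<subseteq> Field r\<close> by blast
    then show False using that by linarith
  qed
  show "mass A \<le> mass B" if "A \<subseteq> B" using mass_mono[OF that \<open>B \<subseteq> Field r\<close>] .
qed

lemma ofilter_below_or_above:
  assumes "ofilter D" "a \<in> Field r"
  shows "D \<subseteq> underS a \<or> under a \<subseteq> D"
proof (cases "a \<in> D")
  case True
  then have "under a \<subseteq> D" using assms(1) unfolding ofilter_def by blast
  then show ?thesis ..
next
  case False
  have "under a = insert a (underS a)" using Refl_under_underS[OF REFL assms(2)] by simp
  then have "D \<subseteq> under a \<Longrightarrow> D \<subseteq> underS a" using False by auto
  then show ?thesis using ofilter_linord[OF assms(1) under_ofilter] by blast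
qed

lemma mass_ofilter_outside_gap:
  "ofilter D \<Longrightarrow> a \<in> Field r \<Longrightarrow> mass D \<le> mass (underS a) \<or> mass (under a) \<le> mass D"
proof -
  assume "ofilter D" "a \<in> Field r"
  then have "D \<subseteq> Field r" using ofilter_subset_Field by blast
  from ofilter_below_or_above[OF \<open>ofilter D\<close> \<open>a \<in> Field r\<close>] show ?thesis
  proof
    assume "D \<subseteq> underS a"
    then show ?thesis using mass_mono[OF _ Order_Relation.underS_Field] by simp
  next
    assume "under a \<subseteq> D"
    then show ?thesis using mass_mono[OF _ \<open>D \<subseteq> Field r\<close>] by simp
  qed
qed

lemma finite_subset_under_some_element:
  "finite F \<Longrightarrow> F \<noteq> {} \<Longrightarrow> F \<subseteq> Field r \<Longrightarrow> \<exists>m\<in>F. F \<subseteq> under m"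
proof (induction F rule: finite_ne_induct)
  case (singleton x)
  then show ?case using Refl_under_in[OF REFL] by auto
next
  case (insert x F)
  then obtain m where "m \<in> F" "F \<subseteq> under m" by auto
  define m' where "m' = max2 x m"
  have "(x, m') \<in> r" "(m, m') \<in> r" "m' \<in> {x, m}"
    unfolding m'_def using max2_greater_among insert.prems \<open>m \<in> F\<close> by auto
  then have "insert x F \<subseteq> under m'"
    using \<open>F \<subseteq> under m\<close> under_incr[OF TRANS] by (auto simp: under_def)
  then show ?case using \<open>m' \<in> {x, m}\<close> \<open>m \<in> F\<close> by blast
qed

lemma mass_ofilter_approx:
  assumes "ofilter D" "0 \<le> t" "t < mass D"
  shows "\<exists>a\<in>D. t < mass (under a)"
proof -
  have D: "D \<subseteq> Field r" using ofilter_subset_Field[OF assms(1)] .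
  obtain F where F: "finite F" "F \<subseteq> D" "dist (sum w F) (mass D) \<le> (mass D - t) / 2"
    using infsum_finite_approximation[OF summable_on_Field_subset[OF D], of "(mass D - t) / 2"] assms(3)
    by auto
  then have "t < sum w F" using assms(3) abs_le_D2 unfolding dist_real_def by fastforce
  then have "F \<noteq> {}" using assms(2) by auto
  moreover have "F \<subseteq> Field r" using F(2) D by blast
  ultimately obtain m where "m \<in> F" "F \<subseteq> under m"
    using finite_subset_under_some_element[OF F(1)] by blast
  have "sum w F = mass F" using F(1) by simp
  also have "\<dots> \<le> mass (under m)" using mass_mono[OF \<open>F \<subseteq> under m\<close> under_Field] .
  finally have "t < mass (under m)" using \<open>t < sum w F\<close> by linarith
  then show ?thesis using \<open>m \<in> F\<close> F(2) by blast
qed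

lemma mass_ofilter_bounds:
  assumes "ofilter D"
  shows "0 \<le> mass D" "mass D \<le> mass (Field r)"
  using mass_nonneg[OF ofilter_subset_Field] mass_mono[OF ofilter_subset_Field] assms by auto

lemma ofilter_mass_underS_less: "ofilter {a \<in> Field r. mass (underS a) < t}"
  unfolding ofilter_def
proof (intro conjI ballI subsetI)
  fix a b assume "a \<in> {a \<in> Field r. mass (underS a) < t}" "b \<in> under a"
  then have "(b, a) \<in> r" "mass (underS a) < t" by (auto simp: under_def)
  moreover have "underS b \<subseteq> underS a" using underS_incr[OF TRANS ANTISYM] \<open>(b, a) \<in> r\<close> .
  then have "mass (underS b) \<le> mass (underS a)"
    using mass_mono[OF _ Order_Relation.underS_Field] by blast
  moreover have "b \<in> Field r" using \<open>(b, a) \<in> r\<close> by (rule FieldI1)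
  ultimately show "b \<in> {a \<in> Field r. mass (underS a) < t}" by simp
qed auto

(* The order filter D of the elements whose point lies below t has mass at least t; if t is
   not itself a mass, finite sums approximating mass D from below find an a in D whose gap
   contains t. *)
lemma non_mass_in_gap:
  assumes "0 \<le> t" "t \<le> mass (Field r)" "t \<notin> mass ` Collect ofilter"
  obtains a where "a \<in> Field r" "mass (underS a) < t" "t < mass (under a)"
proof -
  define D where "D = {a \<in> Field r. mass (underS a) < t}"
  have "ofilter D" unfolding D_def by (rule ofilter_mass_underS_less)
  have "t \<le> mass D"
  proof (cases "D = Field r")
    case True
    then show ?thesis using assms(2) by simp
  next
    case False
    then obtain c where "c \<in> Field r" "D = underS c"
      using \<open>ofilter D\<close> ofilter_underS_Field by blast
    then have "c \<notin> D" using underS_notIn by metis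
    then have "t \<le> mass (underS c)" using \<open>c \<in> Field r\<close> unfolding D_def by simp
    then show ?thesis using \<open>D = underS c\<close> by simp
  qed
  moreover have "t \<noteq> mass D" using assms(3) \<open>ofilter D\<close> by blast
  ultimately have "t < mass D" by simp
  then obtain a where "a \<in> D" "t < mass (under a)"
    using mass_ofilter_approx[OF \<open>ofilter D\<close> assms(1)] by blast
  then show thesis using that by (auto simp: D_def)
qed

lemma closed_ofilter_masses: "closed (mass ` Collect ofilter)"
proof -
  let ?U = "{..<0} \<union> {mass (Field r)<..} \<union> (\<Union>a\<in>Field r. {mass (underS a)<..<mass (under a)})"
  have "- mass ` Collect ofilter \<subseteq> ?U"
  proof
    fix t assume "t \<in> - mass ` Collect ofilter"
    show "t \<in> ?U"
    proof (cases "0 \<le> t \<and> t \<le> mass (Field r)")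
      case True
      then obtain a where "a \<in> Field r" "mass (underS a) < t" "t < mass (under a)"
        using non_mass_in_gap[of t] \<open>t \<in> - mass ` Collect ofilter\<close> by blast
      then show ?thesis by auto
    qed auto
  qed
  moreover have "mass D \<notin> ?U" if "ofilter D" for D
  proof
    assume "mass D \<in> ?U"
    then consider "mass D < 0" | "mass (Field r) < mass D"
      | a where "a \<in> Field r" "mass (underS a) < mass D" "mass D < mass (under a)"
      by auto
    then show False
    proof cases
      case 3
      then show False using mass_ofilter_outside_gap[OF that \<open>a \<in> Field r\<close>] by linarith
    qed (use mass_ofilter_bounds[OF that] in linarith)+
  qed
  then have "?U \<subseteq> - mass ` Collect ofilter" by blast
  moreover have "open ?U" by (intro open_Un open_UN ballI) auto
  ultimately show ?thesis unfolding closed_def by (metis subset_antisym)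
qed

lemma ofilter_masses_gap:
  assumes "p \<in> mass ` Collect ofilter" "q \<in> mass ` Collect ofilter" "p < q"
  shows "\<exists>y. p < y \<and> y < q \<and> y \<notin> mass ` Collect ofilter"
proof -
  obtain A B where AB: "ofilter A" "ofilter B" "p = mass A" "q = mass B" using assms(1,2) by auto
  then have "\<not> B \<subseteq> A" using \<open>p < q\<close> ofilter_mass_le_iff by fastforce
  then have "A \<subset> B" using ofilter_linord[OF \<open>ofilter A\<close> \<open>ofilter B\<close>] by blast
  then have "A \<noteq> Field r" using ofilter_subset_Field[OF \<open>ofilter B\<close>] by blast
  then obtain a where a: "a \<in> Field r" "A = underS a"
    using \<open>ofilter A\<close> ofilter_underS_Field by blast
  have "mass (under a) \<le> q"
    using mass_ofilter_outside_gap[OF \<open>ofilter B\<close> \<open>a \<in> Field r\<close>] \<open>p < q\<close> AB a by auto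
  moreover have "mass (under a) = p + w a" using mass_under[OF \<open>a \<in> Field r\<close>] AB a by simp
  moreover have "0 < w a" using weight_pos \<open>a \<in> Field r\<close> .
  moreover have "p + w a / 2 \<notin> mass ` Collect ofilter"
  proof
    assume "p + w a / 2 \<in> mass ` Collect ofilter"
    then obtain D where "ofilter D" "p + w a / 2 = mass D" by auto
    then show False
      using mass_ofilter_outside_gap[OF \<open>ofilter D\<close> \<open>a \<in> Field r\<close>]
        \<open>mass (under a) = p + w a\<close> AB a \<open>0 < w a\<close> by auto
  qed
  ultimately show ?thesis
    by (intro exI[of _ "p + w a / 2"]) auto
qed

lemma nowhere_dense_closed_ofilter_masses: "nowhere_dense_closed_set (mass ` Collect ofilter)"
proof
  show "closed (mass ` Collect ofilter)" by (rule closed_ofilter_masses)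
  show "mass ` Collect ofilter \<subseteq> {0..1}"
  proof clarify
    fix D assume "ofilter D"
    then show "mass D \<in> {0..1}" using mass_ofilter_bounds[of D] total_weight by simp
  qed
  have "ofilter {}" unfolding ofilter_def by simp
  then show "0 \<in> mass ` Collect ofilter" by force
qed (rule ofilter_masses_gap)

definition segment :: "'a option \<Rightarrow> 'a set" where
  "segment x = (case x of None \<Rightarrow> Field r | Some a \<Rightarrow> underS a)"

definition position :: "'a option \<Rightarrow> real" where
  "position x = mass (segment x)"

lemma segment_image: "segment ` Field (succ_ord r) = Collect ofilter"
proof -
  have "segment ` Field (succ_ord r) = insert (Field r) (underS ` Field r)"
    unfolding Field_succ_ord segment_def by (simp add: image_image)
  also have "\<dots> = Collect ofilter"
    by (auto simp: ofilter_underS_Field)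
  finally show ?thesis .
qed

lemma succ_ord_iff_segment_subset:
  assumes "x \<in> Field (succ_ord r)" "y \<in> Field (succ_ord r)"
  shows "(x, y) \<in> succ_ord r \<longleftrightarrow> segment x \<subseteq> segment y"
proof (cases y)
  case None
  have "segment x \<subseteq> Field r"
    by (cases x) (simp_all add: segment_def Order_Relation.underS_Field)
  then show ?thesis using None assms(1) by (simp add: segment_def below_None_in_succ_ord)
next
  case (Some b)
  then have "b \<in> Field r" using assms(2) by simp
  show ?thesis
  proof (cases x)
    case None
    have "b \<notin> underS b" by (rule underS_notIn)
    then have "\<not> Field r \<subseteq> underS b" using \<open>b \<in> Field r\<close> by blast
    then show ?thesis using None \<open>y = Some b\<close> by (simp add: segment_def)
  next
    case (Some a)
    then have "a \<in> Field r" using assms(1) by simp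
    then show ?thesis
      using Some \<open>y = Some b\<close> underS_incl_iff[OF LIN _ \<open>b \<in> Field r\<close>] by (simp add: segment_def)
  qed
qed

lemma segment_ofilter: "x \<in> Field (succ_ord r) \<Longrightarrow> ofilter (segment x)"
  using segment_image by blast

lemma position_le_iff:
  "x \<in> Field (succ_ord r) \<Longrightarrow> y \<in> Field (succ_ord r) \<Longrightarrow>
     position x \<le> position y \<longleftrightarrow> (x, y) \<in> succ_ord r"
  unfolding position_def
  by (simp add: ofilter_mass_le_iff segment_ofilter succ_ord_iff_segment_subset)

lemma inj_on_position: "inj_on position (Field (succ_ord r))"
proof (rule inj_onI)
  fix x y assume "x \<in> Field (succ_ord r)" "y \<in> Field (succ_ord r)" "position x = position y"
  then have "(x, y) \<in> succ_ord r" "(y, x) \<in> succ_ord r"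
    using position_le_iff by (metis order_refl)+
  then show "x = y"
    using ANTISYM unfolding succ_ord_def by (auto dest: antisymD)
qed

lemma position_image: "position ` Field (succ_ord r) = mass ` Collect ofilter"
  unfolding position_def segment_image[symmetric] image_image ..

end

theorem theorem2p3:
  fixes r :: "'a rel"
  assumes "Well_order r" and "countable (Field r)"
  shows "\<exists>f :: real \<Rightarrow> real.
           continuous_on {0..1} f \<and> f ` {0..1} \<subseteq> {0..1} \<and>
           (\<exists>\<phi>. bij_betw \<phi> (chain_components f) (Field (succ_ord r)) \<and>
                 (\<forall>A\<in>chain_components f. \<forall>B\<in>chain_components f.
                    comp_le f A B \<longleftrightarrow> (\<phi> A, \<phi> B) \<in> succ_ord r))"
proof -
  obtain w :: "'a \<Rightarrow> real" where w: "\<And>a. 0 < w a" "w summable_on Field r" "infsum w (Field r) \<le> 1"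
    using countable_positive_weights[OF assms(2)] by blast
  interpret weighted_well_order r w
    using assms(1) w by unfold_locales auto
  define Z where "Z = position ` Field (succ_ord r)"
  interpret nowhere_dense_closed_set Z
    unfolding Z_def position_image by (rule nowhere_dense_closed_ofilter_masses)
  have "bij_betw position (Field (succ_ord r)) Z"
    unfolding Z_def using inj_on_position by (simp add: bij_betw_def)
  then have "\<exists>\<phi>. bij_betw \<phi> (chain_components (descent_map Z)) (Field (succ_ord r)) \<and>
      (\<forall>A\<in>chain_components (descent_map Z). \<forall>B\<in>chain_components (descent_map Z).
         comp_le (descent_map Z) A B \<longleftrightarrow> (\<phi> A, \<phi> B) \<in> succ_ord r)"
    using chain_components_order_isomorphic position_le_iff by blast
  then show ?thesis
    using continuous_on_descent_map descent_map_into_unit by blast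
qed

end
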